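(* Let $K\ge 2$ and consider the multivariate multiple linear regression model $\mathbf{Y} = \mathbf{X}\boldsymbol{\beta}' + \boldsymbol{\mathcal{E}}$, where $\mathbf{Y}$ is an $n\times K$ matrix of traits, $\mathbf{X}$ is an $n\times 1$ genotype vector, $\boldsymbol{\beta}'=(\beta_1,\dots,\beta_K)$ is the vector of genetic effects, and $\mathrm{vec}(\boldsymbol{\mathcal{E}})\sim N_{nK}(\mathbf{0},\mathbf{I}_n\otimes\boldsymbol{\Sigma})$ with $\boldsymbol{\Sigma}=\sigma^2\big((1-\rho)\mathbf{I}_K+\rho\mathbf{1}\mathbf{1}'\big)$, $\sigma^2>0$, and $\rho>0$ such that $\boldsymbol{\Sigma}$ is positive definite. Assume the genetic effects of the associated traits are equal in size and positive (i.e. every nonzero $\beta_k$ equals a common value $b>0$). Consider two scenarios: "partial association", in which exactly $u<K$ of the $\beta_k$ are nonzero, and "complete association", in which all $K$ of the $\beta_k$ are nonzero. For testing $H_0:\boldsymbol{\beta}=\mathbf{0}$ with the MANOVA test, the power under partial association is asymptotically larger than the power under complete association if $$\frac{u}{K} > \frac{1-\rho}{1+(K-u-1)\rho},$$ where the right-hand side equals the ratio of the second-largest to the largest eigenvalue of $\boldsymbol{\Sigma}_{K-u}$, the $(K-u)\times(K-u)$ compound-symmetry covariance matrix $\sigma^2((1-\rho)\mathbf{I}_{K-u}+\rho\mathbf{1}\mathbf{1}')$ of the $K-u$ truly unassociated traits.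
   Context: $\mathbf{Y}$ and $\mathbf{X}$ are centered. The MANOVA test (Wilks' lambda, equivalent to the likelihood ratio test under the model) of $H_0:\boldsymbol{\beta}=\mathbf{0}$ uses the statistic $-n\log\big(|\mathbf{E}|/|\mathbf{H}+\mathbf{E}|\big)$, where $\hat{\boldsymbol{\beta}}=\mathbf{Y}'\mathbf{X}(\mathbf{X}'\mathbf{X})^{-1}$, $\mathbf{H}=\hat{\boldsymbol{\beta}}(\mathbf{X}'\mathbf{X})\hat{\boldsymbol{\beta}}'$ is the hypothesis sum-of-squares-and-cross-products matrix and $\mathbf{E}=\mathbf{Y}'\mathbf{Y}-\hat{\boldsymbol{\beta}}(\mathbf{X}'\mathbf{X})\hat{\boldsymbol{\beta}}'$ the error one; under $H_0$ it is approximately $\chi^2_K$ for large $n$, and the test rejects for large values. "Asymptotically" refers to the large-sample ($n\to\infty$) approximation of the power. *)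

theory Defs
  imports "HOL-Probability.Probability"
begin

definition cs_cov :: "real \<Rightarrow> real \<Rightarrow> real^'k^'k" where
  "cs_cov sigma2 rho = (\<chi> i j. sigma2 * ((1 - rho) * (if i = j then 1 else 0) + rho))"

definition pos_def_mat :: "real^'k^'k \<Rightarrow> bool" where
  "pos_def_mat A \<longleftrightarrow> transpose A = A \<and> (\<forall>x. x \<noteq> 0 \<longrightarrow> x \<bullet> (A *v x) > 0)"

text \<open>Noncentrality parameter of the (asymptotic) MANOVA / LRT statistic for
  H0: beta = 0 in the model Y = X beta' + E, with centered genotype vector X
  having sum of squares sxx = X'X:  lambda = X'X * beta' Sigma^{-1} beta.\<close>
definition manova_ncp :: "real \<Rightarrow> real^'k^'k \<Rightarrow> real^'k \<Rightarrow> real" where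
  "manova_ncp sxx Sig beta = sxx * (beta \<bullet> (matrix_inv Sig *v beta))"

text \<open>Tail probability P(chi^2_K(lambda) > c) of the noncentral chi-square
  distribution with K degrees of freedom and noncentrality lambda, realised as
  the law of sum_i (Z_i + mu_i)^2 with Z_i iid N(0,1) and |mu|^2 = lambda.\<close>
definition ncchisq_tail :: "nat \<Rightarrow> real \<Rightarrow> real \<Rightarrow> real" where
  "ncchisq_tail K lam c =
     (let M = PiM {..<K} (\<lambda>_. density lborel std_normal_density)
      in measure M {z \<in> space M. (\<Sum>i<K. (z i + (if i = 0 then sqrt lam else 0))^2) > c})"

text \<open>Asymptotic (large n) power of the MANOVA test with critical value c:
  the statistic is approximately chi^2_K(lambda) under the alternative.\<close>
definition manova_asym_power :: "real \<Rightarrow> real^'k^'k \<Rightarrow> real^'k \<Rightarrow> real \<Rightarrow> real" where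
  "manova_asym_power sxx Sig beta c = ncchisq_tail CARD('k) (manova_ncp sxx Sig beta) c"

end

theory Submission
  imports Defs
begin

text \<open>The MANOVA power is the tail \<open>P(\<chi>\<^sup>2\<^sub>K(\<lambda>) > c)\<close> at the noncentrality
  \<open>\<lambda> = X'X \<beta>' \<Sigma>\<^sup>-\<^sup>1 \<beta>\<close>. For the compound-symmetry \<open>\<Sigma>\<close> and \<open>\<beta> = b 1\<^sub>S\<close> with
  \<open>|S| = u\<close>, solving \<open>\<Sigma> v = \<beta>\<close> gives \<open>\<lambda>\<^sub>u = C u (1 + (K - 1 - u) \<rho>)\<close> for a constant
  \<open>C > 0\<close>, hence \<open>\<lambda>\<^sub>K = C K (1 - \<rho>)\<close>, and the hypothesis on \<open>u / K\<close> says precisely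
  \<open>\<lambda>\<^sub>K < \<lambda>\<^sub>u\<close>. It remains that the tail is strictly increasing in \<open>\<lambda>\<close>: conditionally on the
  unshifted coordinates, \<open>P((Z + \<surd>\<lambda>)\<^sup>2 \<le> t)\<close> is the standard normal mass of a window of
  half-width \<open>\<surd>t\<close> centred at \<open>-\<surd>\<lambda>\<close>, which strictly decreases as the window moves away
  from the mode.\<close>

section \<open>Standard normal measure\<close>

lemma prob_space_std_normal_distribution: "prob_space std_normal_distribution"
  by (rule prob_space_normal_density) simp

lemma continuous_on_std_normal_density: "continuous_on S std_normal_density"
  unfolding normal_density_def by (intro continuous_intros) auto

lemma emeasure_std_normal_distribution_atLeastAtMost:
  assumes "x \<le> y"
  shows "emeasure std_normal_distribution {x..y} = ennreal (integral {x..y} std_normal_density)"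
proof -
  have "emeasure std_normal_distribution {x..y}
      = (\<integral>\<^sup>+ t. ennreal (std_normal_density t) * indicator {x..y} t \<partial>lborel)"
    by (rule emeasure_density) auto
  also have "\<dots> = ennreal (integral {x..y} std_normal_density)"
    by (rule nn_integral_has_integral_lebesgue')
       (auto intro!: integrable_integral integrable_continuous_real continuous_on_std_normal_density)
  finally show ?thesis .
qed

lemma std_normal_density_shifted_less:
  assumes "s > 0" "a > 0"
  shows "std_normal_density (-s-a) < std_normal_density (s-a)"
proof -
  have "(s-a)^2 < (-s-a)^2" using assms by (simp add: power2_eq_square algebra_simps)
  then show ?thesis unfolding std_normal_density_def by (simp add: divide_strict_right_mono)
qed

text \<open>Moving the window \<open>[-s, s]\<close> away from the mode loses mass: the derivative in the shift
  \<open>a\<close> is \<open>\<phi>(-s-a) - \<phi>(s-a) < 0\<close>.\<close>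

lemma integral_std_normal_window_strict_antimono:
  assumes "s > 0" "0 \<le> a2" "a2 < a1"
  shows "integral {-s-a1..s-a1} std_normal_density < integral {-s-a2..s-a2} std_normal_density"
proof -
  define lo where "lo = -s-a1-1"
  define G where "G y = integral {lo..y} std_normal_density" for y
  define H where "H a = G (s-a) - G (-s-a)" for a
  have H_eq: "H a = integral {-s-a..s-a} std_normal_density" if "0 \<le> a" "a \<le> a1" for a
  proof -
    have "lo \<le> -s-a" "-s-a \<le> s-a" using that assms unfolding lo_def by auto
    from Henstock_Kurzweil_Integration.integral_combine[OF this
        integrable_continuous_real[OF continuous_on_std_normal_density]]
    show ?thesis unfolding H_def G_def by simp
  qed
  have G_deriv: "(G has_real_derivative std_normal_density y) (at y)" if "lo < y" for y
  proof -
    have "(G has_real_derivative std_normal_density y) (at y within {lo..y+1})"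
      unfolding G_def
      by (rule integral_has_real_derivative) (use that continuous_on_std_normal_density in auto)
    moreover have "y \<in> interior {lo..y+1}" using that by simp
    ultimately show ?thesis using at_within_interior by metis
  qed
  have H_deriv: "(H has_real_derivative std_normal_density (-s-a) - std_normal_density (s-a)) (at a)"
    if "-1 < a" "a < a1 + 1" for a
  proof -
    have "lo < s-a" "lo < -s-a" using that assms unfolding lo_def by auto
    have shift: "((\<lambda>a. t - a) has_real_derivative 0 - 1) (at a)" for t :: real
      by (rule DERIV_diff[OF DERIV_const DERIV_ident])
    have "((\<lambda>a. G (s-a)) has_real_derivative std_normal_density (s-a) * (0 - 1)) (at a)"
      by (rule DERIV_chain2[OF G_deriv[OF \<open>lo < s-a\<close>] shift])
    moreover have "((\<lambda>a. G (-s-a)) has_real_derivative std_normal_density (-s-a) * (0 - 1)) (at a)"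
      by (rule DERIV_chain2[OF G_deriv[OF \<open>lo < -s-a\<close>] shift])
    ultimately have "((\<lambda>a. G (s-a) - G (-s-a)) has_real_derivative
        std_normal_density (s-a) * (0 - 1) - std_normal_density (-s-a) * (0 - 1)) (at a)"
      by (rule DERIV_diff)
    then show ?thesis unfolding H_def by simp
  qed
  have "H a1 < H a2"
  proof (rule DERIV_neg_imp_decreasing_open[OF assms(3)])
    fix x assume "a2 < x" "x < a1"
    then show "\<exists>y. DERIV H x :> y \<and> y < 0"
      using H_deriv[of x] std_normal_density_shifted_less[of s x] assms by auto
  next
    have "isCont H x" if "a2 \<le> x" "x \<le> a1" for x
      using that assms by (intro DERIV_isCont[OF H_deriv]) auto
    then show "continuous_on {a2..a1} H"
      by (intro continuous_at_imp_continuous_on) auto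
  qed
  then show ?thesis using H_eq assms by simp
qed

lemma integral_std_normal_window_pos:
  assumes "s > 0"
  shows "integral {-s..s} std_normal_density > 0"
proof -
  have "integral {-s-1..s-1} std_normal_density \<ge> 0"
    by (auto intro!: integral_nonneg integrable_continuous_real continuous_on_std_normal_density)
  with integral_std_normal_window_strict_antimono[of s 0 1] assms show ?thesis by simp
qed

section \<open>Tails of shifted sums of squares of standard normals\<close>

definition shifted_square_cdf :: "real \<Rightarrow> real \<Rightarrow> real" where
  "shifted_square_cdf a t = measure std_normal_distribution {y. (y + a)^2 \<le> t}"

lemma shifted_square_le_eq_atLeastAtMost:
  assumes "t > 0"
  shows "{y::real. (y + a)^2 \<le> t} = {-sqrt t - a..sqrt t - a}"
proof -
  have iff: "(y + a)^2 \<le> t \<longleftrightarrow> \<bar>y + a\<bar> \<le> sqrt t" for y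
    using abs_le_square_iff[of "y + a" "sqrt t"] assms by simp
  show ?thesis
  proof (rule set_eqI)
    fix y
    show "y \<in> {y. (y + a)^2 \<le> t} \<longleftrightarrow> y \<in> {-sqrt t - a..sqrt t - a}"
      unfolding mem_Collect_eq atLeastAtMost_iff iff abs_le_iff by linarith
  qed
qed

lemma shifted_square_cdf_eq_integral:
  assumes "t > 0"
  shows "shifted_square_cdf a t = integral {-sqrt t - a..sqrt t - a} std_normal_density"
proof -
  interpret prob_space std_normal_distribution by (rule prob_space_std_normal_distribution)
  have "ennreal (shifted_square_cdf a t) = emeasure std_normal_distribution {-sqrt t - a..sqrt t - a}"
    unfolding shifted_square_cdf_def shifted_square_le_eq_atLeastAtMost[OF assms]
    by (simp add: emeasure_eq_measure)
  also have "\<dots> = ennreal (integral {-sqrt t - a..sqrt t - a} std_normal_density)"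
    by (rule emeasure_std_normal_distribution_atLeastAtMost) (use assms in simp)
  finally show ?thesis
    by (subst (asm) ennreal_inj)
       (auto simp: shifted_square_cdf_def
             intro!: integral_nonneg integrable_continuous_real continuous_on_std_normal_density)
qed

lemma shifted_square_cdf_nonpos:
  assumes "t \<le> 0"
  shows "shifted_square_cdf a t = 0"
proof -
  interpret prob_space std_normal_distribution by (rule prob_space_std_normal_distribution)
  have "y = -a" if "(y + a)^2 \<le> t" for y
  proof -
    have "(y + a)^2 \<le> 0" using that assms by linarith
    then show ?thesis by (simp add: eq_neg_iff_add_eq_0)
  qed
  then have "{y. (y + a)^2 \<le> t} \<subseteq> {-a..-a}" by auto
  then have "emeasure std_normal_distribution {y. (y + a)^2 \<le> t} \<le> emeasure std_normal_distribution {-a..-a}"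
    by (intro emeasure_mono) auto
  also have "\<dots> = 0" using emeasure_std_normal_distribution_atLeastAtMost[of "-a" "-a"] by simp
  finally show ?thesis
    unfolding shifted_square_cdf_def by (simp add: emeasure_eq_measure)
qed

lemma mono_shifted_square_cdf: "mono (shifted_square_cdf a)"
proof -
  interpret prob_space std_normal_distribution by (rule prob_space_std_normal_distribution)
  show ?thesis unfolding mono_def shifted_square_cdf_def
    by (auto intro!: finite_measure_mono)
qed

lemma borel_measurable_shifted_square_cdf [measurable]:
  "shifted_square_cdf a \<in> borel_measurable borel"
  by (rule borel_measurable_mono[OF mono_shifted_square_cdf])

lemma shifted_square_cdf_strict_antimono:
  assumes "0 \<le> a2" "a2 < a1" "t > 0"
  shows "shifted_square_cdf a1 t < shifted_square_cdf a2 t"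
  using integral_std_normal_window_strict_antimono[of "sqrt t" a2 a1] assms
  by (simp add: shifted_square_cdf_eq_integral)

lemma shifted_square_cdf_antimono:
  assumes "0 \<le> a2" "a2 < a1"
  shows "shifted_square_cdf a1 t \<le> shifted_square_cdf a2 t"
  using shifted_square_cdf_strict_antimono[OF assms, of t] shifted_square_cdf_nonpos[of t]
  by (cases "t > 0") auto

lemma emeasure_PiM_std_normal_sum_squares_less_pos:
  fixes I :: "'i set"
  assumes "finite I" "c > 0"
  defines "M \<equiv> PiM I (\<lambda>_. std_normal_distribution)"
  shows "0 < emeasure M {w \<in> space M. (\<Sum>i\<in>I. (w i)^2) < c}"
proof -
  interpret prob_space std_normal_distribution by (rule prob_space_std_normal_distribution)
  interpret product_sigma_finite "\<lambda>_::'i. std_normal_distribution" by unfold_locales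
  define \<delta> where "\<delta> = sqrt (c / (card I + 1))"
  have \<delta>: "\<delta> > 0" "\<delta>^2 = c / (card I + 1)"
    using assms unfolding \<delta>_def by simp_all
  define B where "B = PiE I (\<lambda>_. {-\<delta>..\<delta>})"
  have "B \<subseteq> {w \<in> space M. (\<Sum>i\<in>I. (w i)^2) < c}"
  proof
    fix w assume w: "w \<in> B"
    have "(\<Sum>i\<in>I. (w i)^2) \<le> card I * \<delta>^2"
    proof (rule sum_bounded_above)
      fix i assume "i \<in> I"
      then have "\<bar>w i\<bar> \<le> \<bar>\<delta>\<bar>" using w \<delta> unfolding B_def by (auto simp: PiE_iff)
      then show "(w i)^2 \<le> \<delta>^2" by (simp add: abs_le_square_iff)
    qed
    also have "\<dots> < (card I + 1) * \<delta>^2"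
      using \<delta>(1) by (simp add: distrib_right)
    also have "\<dots> = c"
      using \<delta> by simp
    finally show "w \<in> {w \<in> space M. (\<Sum>i\<in>I. (w i)^2) < c}"
      using w unfolding B_def M_def by (auto simp: space_PiM)
  qed
  then have "emeasure M B \<le> emeasure M {w \<in> space M. (\<Sum>i\<in>I. (w i)^2) < c}"
    by (intro emeasure_mono) (auto simp: M_def)
  moreover have "emeasure M B = ennreal (integral {-\<delta>..\<delta>} std_normal_density) ^ card I"
    unfolding M_def B_def
    using emeasure_PiM[OF assms(1), of "\<lambda>_. {-\<delta>..\<delta>}"]
      emeasure_std_normal_distribution_atLeastAtMost[of "-\<delta>" \<delta>] \<delta>
    by simp
  moreover have "\<dots> = ennreal (integral {-\<delta>..\<delta>} std_normal_density ^ card I)"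
    using integral_std_normal_window_pos[OF \<delta>(1)] by (simp add: ennreal_power)
  moreover have "0 < ennreal (integral {-\<delta>..\<delta>} std_normal_density ^ card I)"
    using integral_std_normal_window_pos[OF \<delta>(1)] by simp
  ultimately show ?thesis by order
qed

lemma not_AE_PiM_std_normal_sum_squares_ge:
  assumes "finite I" "c > 0"
  shows "\<not> (AE w in PiM I (\<lambda>_. std_normal_distribution). \<not> (\<Sum>i\<in>I. (w i)^2) < c)"
proof
  assume "AE w in PiM I (\<lambda>_. std_normal_distribution). \<not> (\<Sum>i\<in>I. (w i)^2) < c"
  then have "emeasure (PiM I (\<lambda>_. std_normal_distribution))
      {w \<in> space (PiM I (\<lambda>_. std_normal_distribution)). (\<Sum>i\<in>I. (w i)^2) < c} = 0"
    by (subst (asm) AE_iff_measurable[OF _ refl]) auto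
  with emeasure_PiM_std_normal_sum_squares_less_pos[OF assms] show False
    by simp
qed

lemma emeasure_PiM_insert_shifted_sum_squares_le:
  assumes "finite I" "j \<notin> I"
  defines "M \<equiv> PiM (insert j I) (\<lambda>_. std_normal_distribution)"
  shows "emeasure M {z \<in> space M. (z j + a)^2 + (\<Sum>i\<in>I. (z i)^2) \<le> c}
       = (\<integral>\<^sup>+ w. ennreal (shifted_square_cdf a (c - (\<Sum>i\<in>I. (w i)^2)))
          \<partial>PiM I (\<lambda>_. std_normal_distribution))"
proof -
  interpret prob_space std_normal_distribution by (rule prob_space_std_normal_distribution)
  interpret product_sigma_finite "\<lambda>_. std_normal_distribution" by unfold_locales
  define P where "P z \<longleftrightarrow> (z j + a)^2 + (\<Sum>i\<in>I. (z i)^2) \<le> c" for z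
  have [measurable]: "Measurable.pred M P"
    unfolding P_def M_def by measurable
  have P_upd: "P (w(j := y)) \<longleftrightarrow> (y + a)^2 \<le> c - (\<Sum>i\<in>I. (w i)^2)" for w y
  proof -
    have "(\<Sum>i\<in>I. ((w(j := y)) i)^2) = (\<Sum>i\<in>I. (w i)^2)"
      using assms(2) by (intro sum.cong) auto
    then show ?thesis unfolding P_def fun_upd_same by linarith
  qed
  have "emeasure M {z \<in> space M. P z} = (\<integral>\<^sup>+ z. indicator {z \<in> space M. P z} z \<partial>M)"
    by (rule nn_integral_indicator[symmetric]) measurable
  also have "\<dots> = (\<integral>\<^sup>+ z. indicator {z. P z} z \<partial>M)"
    by (intro nn_integral_cong) (auto simp: indicator_def)
  also have "\<dots> = (\<integral>\<^sup>+ w. (\<integral>\<^sup>+ y. indicator {z. P z} (w(j := y)) \<partial>std_normal_distribution)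
      \<partial>PiM I (\<lambda>_. std_normal_distribution))"
    unfolding M_def by (rule product_nn_integral_insert[OF assms(1,2)]) (simp flip: M_def)
  also have "\<dots> = (\<integral>\<^sup>+ w. ennreal (shifted_square_cdf a (c - (\<Sum>i\<in>I. (w i)^2)))
      \<partial>PiM I (\<lambda>_. std_normal_distribution))"
  proof (intro nn_integral_cong)
    fix w
    have "(\<integral>\<^sup>+ y. indicator {z. P z} (w(j := y)) \<partial>std_normal_distribution)
        = (\<integral>\<^sup>+ y. indicator {y. (y + a)^2 \<le> c - (\<Sum>i\<in>I. (w i)^2)} y \<partial>std_normal_distribution)"
      by (intro nn_integral_cong) (simp add: indicator_def P_upd)
    also have "\<dots> = emeasure std_normal_distribution {y. (y + a)^2 \<le> c - (\<Sum>i\<in>I. (w i)^2)}"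
      by (rule nn_integral_indicator) measurable
    finally show "(\<integral>\<^sup>+ y. indicator {z. P z} (w(j := y)) \<partial>std_normal_distribution)
        = ennreal (shifted_square_cdf a (c - (\<Sum>i\<in>I. (w i)^2)))"
      unfolding shifted_square_cdf_def by (simp add: emeasure_eq_measure)
  qed
  finally show ?thesis unfolding P_def .
qed

text \<open>Integrating out the unshifted coordinates leaves \<open>shifted_square_cdf a (c - Q)\<close>, with
  \<open>Q\<close> their sum of squares; it decreases in \<open>a\<close>, strictly when \<open>Q < c\<close>, an event of
  positive probability.\<close>

lemma emeasure_PiM_insert_shifted_sum_squares_le_strict_antimono:
  assumes "finite I" "j \<notin> I" "c > 0" "0 \<le> a2" "a2 < a1"
  defines "M \<equiv> PiM (insert j I) (\<lambda>_. std_normal_distribution)"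
  shows "emeasure M {z \<in> space M. (z j + a1)^2 + (\<Sum>i\<in>I. (z i)^2) \<le> c}
       < emeasure M {z \<in> space M. (z j + a2)^2 + (\<Sum>i\<in>I. (z i)^2) \<le> c}"
proof -
  define N where "N = PiM I (\<lambda>_. std_normal_distribution)"
  define Q where "Q w = (\<Sum>i\<in>I. (w i)^2)" for w :: "'a \<Rightarrow> real"
  define F where "F a w = ennreal (shifted_square_cdf a (c - Q w))" for a w
  interpret M: prob_space M
    unfolding M_def by (intro prob_space_PiM prob_space_std_normal_distribution)
  have Q_meas [measurable]: "Q \<in> borel_measurable N"
    unfolding Q_def N_def by measurable
  have emeasure_eq: "emeasure M {z \<in> space M. (z j + a)^2 + Q z \<le> c} = integral\<^sup>N N (F a)" for a
    unfolding M_def N_def F_def Q_def by (rule emeasure_PiM_insert_shifted_sum_squares_le[OF assms(1,2)])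
  have "AE w in N. F a1 w \<le> F a2 w"
    unfolding F_def using shifted_square_cdf_antimono[OF assms(4,5)] by (auto intro!: ennreal_leI)
  moreover have "\<not> (AE w in N. F a2 w \<le> F a1 w)"
  proof
    assume "AE w in N. F a2 w \<le> F a1 w"
    then have "AE w in N. \<not> Q w < c"
    proof (rule eventually_mono)
      fix w
      assume "F a2 w \<le> F a1 w"
      then show "\<not> Q w < c"
        using shifted_square_cdf_strict_antimono[OF assms(4,5), of "c - Q w"]
          measure_nonneg[of std_normal_distribution "{y. (y + a1)^2 \<le> c - Q w}"]
        by (auto simp: F_def ennreal_le_iff2 shifted_square_cdf_def)
    qed
    with not_AE_PiM_std_normal_sum_squares_ge[OF assms(1,3)] show False
      unfolding Q_def N_def by simp
  qed
  moreover have "integral\<^sup>N N (F a1) \<noteq> \<infinity>"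
    unfolding emeasure_eq[symmetric] by (simp add: M.emeasure_eq_measure)
  moreover have "F a \<in> borel_measurable N" for a
    unfolding F_def by measurable
  ultimately have "integral\<^sup>N N (F a1) < integral\<^sup>N N (F a2)"
    by (intro nn_integral_less) auto
  then show ?thesis
    using emeasure_eq unfolding Q_def by simp
qed

lemma ncchisq_tail_strict_mono:
  assumes "K \<ge> 1" "c > 0" "0 \<le> lam1" "lam1 < lam2"
  shows "ncchisq_tail K lam1 c < ncchisq_tail K lam2 c"
proof -
  define I where "I = {1..<K}"
  define M where "M = PiM {..<K} (\<lambda>_. std_normal_distribution)"
  define A where "A lam = {z \<in> space M. (z 0 + sqrt lam)^2 + (\<Sum>i\<in>I. (z i)^2) \<le> c}" for lam
  have I: "finite I" "0 \<notin> I" and K_eq: "{..<K} = insert 0 I"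
    using assms(1) unfolding I_def by auto
  interpret M: prob_space M
    unfolding M_def by (intro prob_space_PiM prob_space_std_normal_distribution)
  have A_sets: "A lam \<in> sets M" for lam
    unfolding A_def M_def K_eq by measurable
  have sum_eq: "(\<Sum>i<K. (z i + (if i = 0 then a else 0))^2) = (z 0 + a)^2 + (\<Sum>i\<in>I. (z i)^2)"
    for z a
  proof -
    have "(\<Sum>i\<in>I. (z i + (if i = 0 then a else 0))^2) = (\<Sum>i\<in>I. (z i)^2)"
      using I by (intro sum.cong) auto
    then show ?thesis unfolding K_eq using I by simp
  qed
  have "ncchisq_tail K lam c = measure M (space M - A lam)" for lam
    unfolding ncchisq_tail_def M_def A_def Let_def sum_eq
    by (intro arg_cong[where f = "measure _"]) auto
  then have tail_eq: "ncchisq_tail K lam c = 1 - measure M (A lam)" for lam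
    using M.prob_compl[OF A_sets] by simp
  have "emeasure M (A lam2) < emeasure M (A lam1)"
    unfolding A_def M_def K_eq
    using emeasure_PiM_insert_shifted_sum_squares_le_strict_antimono[OF I assms(2)] assms(3,4)
    by (simp add: real_sqrt_less_iff)
  then show ?thesis
    unfolding tail_eq by (simp add: M.emeasure_eq_measure ennreal_less_iff)
qed

section \<open>The compound-symmetry covariance matrix\<close>

lemma cs_cov_mulv:
  "(cs_cov s r :: real^'k^'k) *v v = (\<chi> i. s * ((1 - r) * v$i + r * (\<Sum>j\<in>UNIV. v$j)))"
proof -
  have "(\<Sum>j\<in>UNIV. s * ((1 - r) * (if i = j then 1 else 0) + r) * v$j)
        = (\<Sum>j\<in>UNIV. s * (1 - r) * (if i = j then v$j else 0) + s * r * v$j)" for i :: 'k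
    by (intro sum.cong) (auto simp: algebra_simps)
  also have "\<dots> i = s * (1 - r) * (\<Sum>j\<in>UNIV. if i = j then v$j else 0) + s * r * (\<Sum>j\<in>UNIV. v$j)" for i
    by (simp only: sum.distrib sum_distrib_left[symmetric])
  also have "\<dots> i = s * ((1 - r) * v$i + r * (\<Sum>j\<in>UNIV. v$j))" for i
    by (simp add: algebra_simps)
  finally show ?thesis
    unfolding cs_cov_def matrix_vector_mult_def by (simp add: vec_eq_iff)
qed

lemma inner_cs_cov_mulv:
  "x \<bullet> ((cs_cov s r :: real^'k^'k) *v x) = s * ((1 - r) * (x \<bullet> x) + r * (\<Sum>j\<in>UNIV. x$j)^2)"
proof -
  have "x \<bullet> ((cs_cov s r :: real^'k^'k) *v x)
      = (\<Sum>i\<in>UNIV. x$i * (s * ((1 - r) * x$i + r * (\<Sum>j\<in>UNIV. x$j))))"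
    unfolding cs_cov_mulv inner_vec_def by simp
  also have "\<dots> = (\<Sum>i\<in>UNIV. s * (1 - r) * (x$i * x$i) + s * r * (\<Sum>j\<in>UNIV. x$j) * x$i)"
    by (intro sum.cong) (auto simp: algebra_simps)
  also have "\<dots> = s * (1 - r) * (\<Sum>i\<in>UNIV. x$i * x$i)
      + s * r * (\<Sum>j\<in>UNIV. x$j) * (\<Sum>i\<in>UNIV. x$i)"
    by (simp only: sum.distrib sum_distrib_left[symmetric])
  also have "(\<Sum>i\<in>UNIV. x$i * x$i) = x \<bullet> x" by (simp add: inner_vec_def)
  also have "s * (1 - r) * (x \<bullet> x) + s * r * (\<Sum>j\<in>UNIV. x$j) * (\<Sum>i\<in>UNIV. x$i)
      = s * ((1 - r) * (x \<bullet> x) + r * (\<Sum>j\<in>UNIV. x$j)^2)"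
    by (simp add: power2_eq_square algebra_simps)
  finally show ?thesis .
qed

text \<open>The eigenvalues of \<open>cs_cov s r\<close> are \<open>s (1 + (K - 1) r)\<close> (eigenvector \<open>1\<close>) and
  \<open>s (1 - r)\<close> (on the vectors with zero sum); positive definiteness makes both positive.\<close>

lemma pos_def_cs_cov_imp_eigenvalue_ones:
  assumes "pos_def_mat (cs_cov s r :: real^'k^'k)"
  shows "0 < s * (1 + (real CARD('k) - 1) * r)"
proof -
  define x :: "real^'k" where "x = (\<chi> i. 1)"
  have "x \<noteq> 0" unfolding x_def by (simp add: vec_eq_iff)
  then have "0 < x \<bullet> ((cs_cov s r :: real^'k^'k) *v x)"
    using assms unfolding pos_def_mat_def by simp
  also have "\<dots> = real CARD('k) * (s * (1 + (real CARD('k) - 1) * r))"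
    unfolding inner_cs_cov_mulv x_def by (simp add: inner_vec_def power2_eq_square algebra_simps)
  finally show ?thesis
    by (rule zero_less_mult_pos) simp
qed

lemma pos_def_cs_cov_imp_eigenvalue_contrasts:
  assumes "CARD('k) \<ge> 2" "pos_def_mat (cs_cov s r :: real^'k^'k)"
  shows "0 < s * (1 - r)"
proof -
  obtain i j :: 'k where "i \<noteq> j"
    using assms(1) card_le_Suc0_iff_eq[of "UNIV :: 'k set"] by auto
  define x :: "real^'k" where "x = axis i 1 - axis j 1"
  have "x \<noteq> 0" using \<open>i \<noteq> j\<close> unfolding x_def by (auto simp: vec_eq_iff axis_def)
  have sum_x: "(\<Sum>k\<in>UNIV. x$k) = 0"
    unfolding x_def using \<open>i \<noteq> j\<close> by (simp add: axis_def sum_subtractf sum.delta sum.delta')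
  have "0 < x \<bullet> ((cs_cov s r :: real^'k^'k) *v x)"
    using assms(2) \<open>x \<noteq> 0\<close> unfolding pos_def_mat_def by simp
  also have "\<dots> = s * (1 - r) * (x \<bullet> x)"
    unfolding inner_cs_cov_mulv sum_x by simp
  finally show ?thesis
    by (rule zero_less_mult_pos2) (use \<open>x \<noteq> 0\<close> in simp)
qed

lemma matrix_inv_mult_left:
  assumes "invertible A"
  shows "matrix_inv A ** A = mat 1"
  using assms unfolding matrix_inv_def invertible_def by (rule someI2_ex) auto

lemma pos_def_mat_imp_invertible:
  fixes A :: "real^'k^'k"
  assumes "pos_def_mat A"
  shows "invertible A"
proof -
  have "x = 0" if "A *v x = 0" for x
    using assms that unfolding pos_def_mat_def by (metis inner_zero_right less_irrefl)
  then show ?thesis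
    by (simp add: invertible_left_inverse matrix_left_invertible_ker)
qed

text \<open>The inverse image of \<open>b 1\<^sub>S\<close> is found with the ansatz \<open>\<alpha> 1\<^sub>S + \<gamma> 1\<close>: the
  \<open>1\<^sub>S\<close>-part is scaled by the eigenvalue \<open>s (1 - r)\<close>, and \<open>\<gamma>\<close> cancels the constant part.\<close>

lemma matrix_inv_cs_cov_mulv_indicator:
  fixes S :: "'k::finite set" and b s r :: real
  assumes "CARD('k) \<ge> 2" "pos_def_mat (cs_cov s r :: real^'k^'k)"
  defines "\<alpha> \<equiv> b / (s * (1 - r))"
    and "\<gamma> \<equiv> - r * (b / (s * (1 - r))) * real (card S) / (1 + (real CARD('k) - 1) * r)"
  shows "matrix_inv (cs_cov s r :: real^'k^'k) *v (\<chi> k. if k \<in> S then b else 0)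
       = (\<chi> k. (if k \<in> S then \<alpha> else 0) + \<gamma>)"
proof -
  define v :: "real^'k" where "v = (\<chi> k. (if k \<in> S then \<alpha> else 0) + \<gamma>)"
  have "0 < s * (1 + (real CARD('k) - 1) * r)" and s1r: "0 < s * (1 - r)"
    using pos_def_cs_cov_imp_eigenvalue_ones[OF assms(2)]
      pos_def_cs_cov_imp_eigenvalue_contrasts[OF assms(1,2)] by simp_all
  then have "1 + (real CARD('k) - 1) * r \<noteq> 0" by auto
  then have balance: "(1 - r) * \<gamma> + r * (\<alpha> * card S + \<gamma> * CARD('k)) = 0"
    unfolding \<gamma>_def \<alpha>_def[symmetric] by (simp add: field_simps)
  have sum_v: "(\<Sum>j\<in>UNIV. v$j) = \<alpha> * card S + \<gamma> * CARD('k)"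
    unfolding v_def by (simp add: sum.distrib sum.If_cases)
  have "s * ((1 - r) * v$i + r * (\<alpha> * card S + \<gamma> * CARD('k))) = (if i \<in> S then b else 0)" for i
  proof -
    have "s * ((1 - r) * v$i + r * (\<alpha> * card S + \<gamma> * CARD('k)))
        = s * (1 - r) * (if i \<in> S then \<alpha> else 0)
          + s * ((1 - r) * \<gamma> + r * (\<alpha> * card S + \<gamma> * CARD('k)))"
      unfolding v_def by (simp add: algebra_simps)
    then show ?thesis using balance s1r unfolding \<alpha>_def by auto
  qed
  then have "(cs_cov s r :: real^'k^'k) *v v = (\<chi> k. if k \<in> S then b else 0)"
    unfolding cs_cov_mulv sum_v by (simp add: vec_eq_iff)
  moreover have "matrix_inv (cs_cov s r :: real^'k^'k) *v ((cs_cov s r :: real^'k^'k) *v v) = v"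
    by (simp add: matrix_vector_mul_assoc
        matrix_inv_mult_left[OF pos_def_mat_imp_invertible[OF assms(2)]])
  ultimately show ?thesis
    unfolding v_def by simp
qed

lemma manova_ncp_cs_cov_indicator:
  fixes S :: "'k::finite set"
  assumes "CARD('k) \<ge> 2" "pos_def_mat (cs_cov s r :: real^'k^'k)"
  defines "K \<equiv> real CARD('k)" and "u \<equiv> real (card S)"
  shows "manova_ncp sxx (cs_cov s r :: real^'k^'k) (\<chi> k. if k \<in> S then b else 0)
       = sxx * b^2 / (s * (1 - r) * (1 + (K - 1) * r)) * (u * (1 + (K - 1 - u) * r))"
proof -
  define D where "D = 1 + (K - 1) * r"
  define \<alpha> where "\<alpha> = b / (s * (1 - r))"
  define \<gamma> where "\<gamma> = - r * \<alpha> * u / D"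
  have "0 < s * D" and s1r: "0 < s * (1 - r)"
    using pos_def_cs_cov_imp_eigenvalue_ones[OF assms(2)]
      pos_def_cs_cov_imp_eigenvalue_contrasts[OF assms(1,2)]
    unfolding D_def K_def by simp_all
  then have "D \<noteq> 0" by auto
  have "(\<chi> k. if k \<in> S then b else 0) \<bullet> (\<chi> k. (if k \<in> S then \<alpha> else 0) + \<gamma>)
      = (\<Sum>k\<in>UNIV. if k \<in> S then b * (\<alpha> + \<gamma>) else 0)"
    unfolding inner_vec_def by (intro sum.cong) auto
  also have "\<dots> = b * (\<alpha> + \<gamma>) * u"
    unfolding u_def by (simp add: sum.If_cases)
  also have "\<alpha> + \<gamma> = \<alpha> * (1 + (K - 1 - u) * r) / D"
    using \<open>D \<noteq> 0\<close> unfolding \<gamma>_def by (simp add: field_simps D_def)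
  also have "b * (\<alpha> * (1 + (K - 1 - u) * r) / D) * u
      = b^2 / (s * (1 - r) * D) * (u * (1 + (K - 1 - u) * r))"
    using \<open>D \<noteq> 0\<close> s1r unfolding \<alpha>_def by (simp add: power2_eq_square)
  finally show ?thesis
    unfolding manova_ncp_def matrix_inv_cs_cov_mulv_indicator[OF assms(1,2)]
    unfolding \<alpha>_def \<gamma>_def D_def K_def u_def by simp
qed

theorem theorem1:
  fixes sigma2 rho b sxx c :: real
    and S :: "'k::finite set"
  assumes "CARD('k) \<ge> 2"
    and "sigma2 > 0" and "rho > 0"
    and "pos_def_mat (cs_cov sigma2 rho :: real^'k^'k)"
    and "b > 0"
    and "sxx > 0"
    and "c > 0"
    and "card S < CARD('k)"
    and "real (card S) / real CARD('k) >
           (1 - rho) / (1 + (real CARD('k) - real (card S) - 1) * rho)"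
  shows "manova_asym_power sxx (cs_cov sigma2 rho :: real^'k^'k)
             (\<chi> k. if k \<in> S then b else 0) c
         > manova_asym_power sxx (cs_cov sigma2 rho :: real^'k^'k) (\<chi> k. b) c"
proof -
  define K where "K = real CARD('k)"
  define u where "u = real (card S)"
  define P where "P = sxx * b^2 / (sigma2 * (1 - rho) * (1 + (K - 1) * rho))"
  have "1 - rho > 0"
    using pos_def_cs_cov_imp_eigenvalue_contrasts[OF assms(1,4)] assms(2) by (simp add: zero_less_mult_iff)
  moreover have "1 + (K - 1) * rho > 0"
    using assms(3) unfolding K_def by (simp add: add_pos_nonneg)
  ultimately have "P > 0"
    using assms(2,5,6) unfolding P_def by simp
  have partial: "manova_ncp sxx (cs_cov sigma2 rho) (\<chi> k. if k \<in> S then b else 0 :: real^'k)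
      = P * (u * (1 + (K - 1 - u) * rho))"
    unfolding manova_ncp_cs_cov_indicator[OF assms(1,4)] P_def K_def u_def ..
  have complete: "manova_ncp sxx (cs_cov sigma2 rho) (\<chi> k. b :: real^'k) = P * (K * (1 - rho))"
    using manova_ncp_cs_cov_indicator[OF assms(1,4), of sxx UNIV b]
    unfolding P_def K_def by simp
  have "1 + (K - u - 1) * rho > 0"
    using assms(3,8) unfolding K_def u_def by (simp add: add_pos_nonneg)
  then have "K * (1 - rho) < u * (1 + (K - 1 - u) * rho)"
    using assms(1,9) unfolding K_def u_def by (simp add: divide_less_eq less_divide_eq field_simps)
  then show ?thesis
    unfolding manova_asym_power_def partial complete
    using \<open>P > 0\<close> \<open>1 - rho > 0\<close> assms(1,7)
    by (intro ncchisq_tail_strict_mono) (auto simp: K_def)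
qed

end
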